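(* Let $K$ be an algebraically closed field of characteristic $0$ and let $G=\mathrm{SL}(2,K)$, regarded as the affine variety $\{ad-bc=1\}\subset \mathbb{A}^4_{a,b,c,d}$. For every $n\ge 1$, every non-constant regular function $f$ on $G^n$ omits no values in $K$, i.e. $f(G^n)=K$. *)

theory Defs
  imports "HOL-Computational_Algebra.Polynomial"
begin

definition alg_closed :: "'a::field itself \<Rightarrow> bool" where
  "alg_closed _ \<longleftrightarrow> (\<forall>p::'a poly. degree p \<ge> 1 \<longrightarrow> (\<exists>x. poly p x = 0))"

text \<open>Polynomial functions on the affine space \<open>K^N\<close>, points being \<open>nat \<Rightarrow> K\<close>
  (only the coordinates \<open>0..<N\<close> are used).\<close>
inductive_set poly_funs :: "nat \<Rightarrow> ((nat \<Rightarrow> 'a::comm_ring_1) \<Rightarrow> 'a) set" for N :: nat where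
  const: "(\<lambda>x. c) \<in> poly_funs N"
| var: "i < N \<Longrightarrow> (\<lambda>x. x i) \<in> poly_funs N"
| add: "p \<in> poly_funs N \<Longrightarrow> q \<in> poly_funs N \<Longrightarrow> (\<lambda>x. p x + q x) \<in> poly_funs N"
| mult: "p \<in> poly_funs N \<Longrightarrow> q \<in> poly_funs N \<Longrightarrow> (\<lambda>x. p x * q x) \<in> poly_funs N"

text \<open>\<open>SL(2,K)^n\<close> as an affine variety in \<open>K^{4n}\<close>: the \<open>i\<close>-th factor has coordinates
  \<open>(a,b,c,d) = (x(4i), x(4i+1), x(4i+2), x(4i+3))\<close>; coordinates \<open>\<ge> 4n\<close> are set to 0.\<close>
definition SL2_pow :: "nat \<Rightarrow> (nat \<Rightarrow> 'a::comm_ring_1) set" where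
  "SL2_pow n = {x. (\<forall>i<n. x (4*i) * x (4*i+3) - x (4*i+1) * x (4*i+2) = 1)
                  \<and> (\<forall>j\<ge>4*n. x j = 0)}"

definition regular_on_SL2_pow :: "nat \<Rightarrow> ((nat \<Rightarrow> 'a::comm_ring_1) \<Rightarrow> 'a) \<Rightarrow> bool" where
  "regular_on_SL2_pow n f \<longleftrightarrow> (\<exists>p\<in>poly_funs (4*n). \<forall>x\<in>SL2_pow n. f x = p x)"

end

theory Submission
  imports Defs
begin

text \<open>Two points of \<open>G\<^sup>n\<close> can be joined by a chain of polynomial lines
  \<open>t \<mapsto> x \<cdot> u(t)\<close> lying in \<open>G\<^sup>n\<close>, where \<open>u(t)\<close> is an elementary unipotent matrix acting on a
  single factor: column operations reduce every factor to the identity. If \<open>f\<close> is not constant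
  on \<open>G\<^sup>n\<close>, it is not constant on one of these lines, and there it is a non-constant
  polynomial in \<open>t\<close>, which takes every value because \<open>K\<close> is algebraically closed.\<close>

definition poly_line_step :: "(nat \<Rightarrow> 'a::comm_ring_1) set \<Rightarrow> ((nat \<Rightarrow> 'a) \<times> (nat \<Rightarrow> 'a)) set" where
  "poly_line_step S = {(y, z). \<exists>P s. (\<forall>t. (\<lambda>j. poly (P j) t) \<in> S)
                                   \<and> (\<lambda>j. poly (P j) 0) = y \<and> (\<lambda>j. poly (P j) s) = z}"

lemma poly_funs_along_poly_curve:
  assumes "p \<in> poly_funs N"
  shows "\<exists>Q. \<forall>t. p (\<lambda>j. poly (P j) t) = poly Q t"
  using assms
proof induction
  case (const c)
  show ?case by (rule exI[of _ "[:c:]"]) simp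
next
  case (var i)
  show ?case by (rule exI[of _ "P i"]) simp
next
  case (add p q)
  then obtain Q1 Q2 where "\<forall>t. p (\<lambda>j. poly (P j) t) = poly Q1 t" "\<forall>t. q (\<lambda>j. poly (P j) t) = poly Q2 t"
    by blast
  then show ?case by (intro exI[of _ "Q1 + Q2"]) simp
next
  case (mult p q)
  then obtain Q1 Q2 where "\<forall>t. p (\<lambda>j. poly (P j) t) = poly Q1 t" "\<forall>t. q (\<lambda>j. poly (P j) t) = poly Q2 t"
    by blast
  then show ?case by (intro exI[of _ "Q1 * Q2"]) simp
qed

lemma alg_closed_poly_surj:
  fixes Q :: "'a::field poly"
  assumes "alg_closed TYPE('a)" and "poly Q r \<noteq> poly Q s"
  shows "\<exists>t. poly Q t = c"
proof -
  have "degree Q \<noteq> 0"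
  proof
    assume "degree Q = 0"
    then obtain k where "Q = [:k:]" by (metis degree_eq_zeroE)
    with assms(2) show False by simp
  qed
  then have "degree (Q + [:-c:]) \<ge> 1"
    by (subst degree_add_eq_left) auto
  then obtain t where "poly (Q + [:-c:]) t = 0"
    using assms(1) unfolding alg_closed_def by blast
  then show ?thesis by auto
qed

lemma poly_funs_surj_if_nonconstant_on_step:
  fixes p :: "(nat \<Rightarrow> 'a::field) \<Rightarrow> 'a"
  assumes "alg_closed TYPE('a)" and "p \<in> poly_funs N"
    and "(y, z) \<in> poly_line_step S" and "p y \<noteq> p z"
  shows "p ` S = UNIV"
proof -
  obtain P s where in_S: "\<forall>t. (\<lambda>j. poly (P j) t) \<in> S"
    and y: "(\<lambda>j. poly (P j) 0) = y" and z: "(\<lambda>j. poly (P j) s) = z"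
    using assms(3) unfolding poly_line_step_def by blast
  obtain Q where Q: "\<forall>t. p (\<lambda>j. poly (P j) t) = poly Q t"
    using poly_funs_along_poly_curve[OF assms(2)] by blast
  have "poly Q 0 \<noteq> poly Q s"
    using assms(4) y z Q by metis
  then have "\<exists>t. p (\<lambda>j. poly (P j) t) = c" for c
    using alg_closed_poly_surj[OF assms(1)] Q by metis
  then show ?thesis
    using in_S by (metis UNIV_eq_I image_eqI)
qed

lemma rtrancl_ends_differ_imp_step_differs:
  assumes "(x, z) \<in> R\<^sup>*" and "g x \<noteq> g z"
  shows "\<exists>(y, w) \<in> R. g y \<noteq> g w"
  using assms
proof induction
  case (step y w)
  then show ?case by (cases "g x = g y") auto
qed simp

lemma poly_funs_surj_if_nonconstant_on_chain:
  fixes p :: "(nat \<Rightarrow> 'a::field) \<Rightarrow> 'a"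
  assumes "alg_closed TYPE('a)" and "p \<in> poly_funs N"
    and "(x, z) \<in> (poly_line_step S)\<^sup>*" and "p x \<noteq> p z"
  shows "p ` S = UNIV"
  using rtrancl_ends_differ_imp_step_differs[where g=p, OF assms(3,4)]
    poly_funs_surj_if_nonconstant_on_step[OF assms(1,2)] by blast

definition set_block :: "nat \<Rightarrow> 'a \<Rightarrow> 'a \<Rightarrow> 'a \<Rightarrow> 'a \<Rightarrow> (nat \<Rightarrow> 'a) \<Rightarrow> nat \<Rightarrow> 'a" where
  "set_block i a b c d x = x(4*i := a, 4*i+1 := b, 4*i+2 := c, 4*i+3 := d)"

lemma set_block_self: "set_block i (x (4*i)) (x (4*i+1)) (x (4*i+2)) (x (4*i+3)) x = x"
  by (rule ext) (simp add: set_block_def)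

lemma set_block_in_SL2_pow:
  assumes "x \<in> SL2_pow n" and "i < n" and "a*d - b*c = (1::'a::comm_ring_1)"
  shows "set_block i a b c d x \<in> SL2_pow n"
proof -
  have "set_block i a b c d x (4*k) * set_block i a b c d x (4*k+3)
      - set_block i a b c d x (4*k+1) * set_block i a b c d x (4*k+2) = 1" if "k < n" for k
  proof (cases "k = i")
    case True
    then show ?thesis using assms(3) by (simp add: set_block_def)
  next
    case False
    then show ?thesis using assms(1) that by (simp add: set_block_def SL2_pow_def)
  qed
  moreover have "\<forall>j\<ge>4*n. set_block i a b c d x j = 0"
    using assms(1,2) by (auto simp: set_block_def SL2_pow_def)
  ultimately show ?thesis by (simp add: SL2_pow_def)
qed

lemma set_block_poly_curve:
  "set_block i (poly A t) (poly B t) (poly C t) (poly D t) x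
     = (\<lambda>j. poly (((\<lambda>j. [:x j:])(4*i := A, 4*i+1 := B, 4*i+2 := C, 4*i+3 := D)) j) t)"
  by (rule ext) (simp add: set_block_def)

lemma SL2_block_curve_step:
  fixes A B C D :: "'a::field poly"
  assumes "x \<in> SL2_pow n" and "i < n"
    and "\<And>t. poly A t * poly D t - poly B t * poly C t = 1"
  shows "(set_block i (poly A 0) (poly B 0) (poly C 0) (poly D 0) x,
          set_block i (poly A s) (poly B s) (poly C s) (poly D s) x) \<in> poly_line_step (SL2_pow n)"
  unfolding poly_line_step_def set_block_poly_curve
  using set_block_in_SL2_pow[OF assms(1,2,3), unfolded set_block_poly_curve] by blast

lemma SL2_add_first_column_step:
  assumes "x \<in> SL2_pow n" and "i < n" and "a*d - b*c = (1::'a::field)"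
    and "b' = b + t*a" and "d' = d + t*c"
  shows "(set_block i a b c d x, set_block i a b' c d' x) \<in> poly_line_step (SL2_pow n)"
  using SL2_block_curve_step[OF assms(1,2), of "[:a:]" "[:d, c:]" "[:b, a:]" "[:c:]" t] assms(3-5)
  by (simp add: algebra_simps)

lemma SL2_add_second_column_step:
  assumes "x \<in> SL2_pow n" and "i < n" and "a*d - b*c = (1::'a::field)"
    and "a' = a + t*b" and "c' = c + t*d"
  shows "(set_block i a b c d x, set_block i a' b c' d x) \<in> poly_line_step (SL2_pow n)"
  using SL2_block_curve_step[OF assms(1,2), of "[:a, b:]" "[:d:]" "[:b:]" "[:c, d:]" t] assms(3-5)
  by (simp add: algebra_simps)

lemma SL2_block_to_identity_nonzero_c:
  assumes "x \<in> SL2_pow n" and "i < n" and "a*d - b*c = (1::'a::field)" and "c \<noteq> 0"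
  shows "(set_block i a b c d x, set_block i 1 0 0 1 x) \<in> (poly_line_step (SL2_pow n))\<^sup>*"
proof -
  define b1 where "b1 = b + ((1 - d) / c) * a"
  have det1: "a*1 - b1*c = 1"
    using assms(3,4) by (simp add: b1_def field_simps)
  have "(set_block i a b c d x, set_block i a b1 c 1 x) \<in> poly_line_step (SL2_pow n)"
    by (rule SL2_add_first_column_step[OF assms(1-3) b1_def]) (use assms(4) in simp)
  moreover have "(set_block i a b1 c 1 x, set_block i 1 b1 0 1 x) \<in> poly_line_step (SL2_pow n)"
    by (rule SL2_add_second_column_step[OF assms(1,2) det1, where t="-c"]) (use det1 in \<open>simp_all add: mult.commute\<close>)
  moreover have "(set_block i 1 b1 0 1 x, set_block i 1 0 0 1 x) \<in> poly_line_step (SL2_pow n)"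
    by (rule SL2_add_first_column_step[OF assms(1,2), where t="-b1"]) simp_all
  ultimately show ?thesis by (meson r_into_rtrancl rtrancl_into_rtrancl)
qed

lemma SL2_block_to_identity:
  assumes "x \<in> SL2_pow n" and "i < n" and "a*d - b*c = (1::'a::field)"
  shows "(set_block i a b c d x, set_block i 1 0 0 1 x) \<in> (poly_line_step (SL2_pow n))\<^sup>*"
proof (cases "c = 0")
  case False
  then show ?thesis using SL2_block_to_identity_nonzero_c assms by blast
next
  case True
  then have "d \<noteq> 0" using assms(3) by auto
  have "(a+b)*d - b*(c+d) = 1" using assms(3) by (simp add: algebra_simps)
  then have "(set_block i (a+b) b (c+d) d x, set_block i 1 0 0 1 x) \<in> (poly_line_step (SL2_pow n))\<^sup>*"
    using SL2_block_to_identity_nonzero_c[OF assms(1,2)] True \<open>d \<noteq> 0\<close> by simp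
  moreover have "(set_block i a b c d x, set_block i (a+b) b (c+d) d x) \<in> poly_line_step (SL2_pow n)"
    by (rule SL2_add_second_column_step[OF assms, where t=1]) simp_all
  ultimately show ?thesis by (meson converse_rtrancl_into_rtrancl)
qed

definition identity_blocks :: "nat \<Rightarrow> (nat \<Rightarrow> 'a::comm_ring_1) \<Rightarrow> nat \<Rightarrow> 'a" where
  "identity_blocks m x = (\<lambda>j. if j < 4*m then (if j mod 4 = 0 \<or> j mod 4 = 3 then 1 else 0) else x j)"

lemma identity_blocks_0 [simp]: "identity_blocks 0 x = x"
  by (simp add: identity_blocks_def)

lemma identity_blocks_Suc:
  "identity_blocks (Suc m) x = set_block m 1 0 0 1 (identity_blocks m x)"
  by (rule ext) (auto simp: identity_blocks_def set_block_def; presburger)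

lemma identity_blocks_SL2_pow_eq:
  assumes "x \<in> SL2_pow n" and "y \<in> SL2_pow n"
  shows "identity_blocks n x = identity_blocks n y"
  using assms by (auto simp: identity_blocks_def SL2_pow_def)

lemma SL2_pow_chain_to_identity_blocks:
  fixes x :: "nat \<Rightarrow> 'a::field"
  assumes "x \<in> SL2_pow n" and "m \<le> n"
  shows "identity_blocks m x \<in> SL2_pow n \<and> (x, identity_blocks m x) \<in> (poly_line_step (SL2_pow n))\<^sup>*"
  using assms(2)
proof (induction m)
  case 0
  then show ?case using assms(1) by simp
next
  case (Suc m)
  let ?y = "identity_blocks m x"
  have y: "?y \<in> SL2_pow n" and x_y: "(x, ?y) \<in> (poly_line_step (SL2_pow n))\<^sup>*" and "m < n"
    using Suc by auto
  have "?y (4*m) * ?y (4*m+3) - ?y (4*m+1) * ?y (4*m+2) = 1"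
    using y \<open>m < n\<close> by (simp add: SL2_pow_def)
  from SL2_block_to_identity[OF y \<open>m < n\<close> this]
  have "(?y, identity_blocks (Suc m) x) \<in> (poly_line_step (SL2_pow n))\<^sup>*"
    by (simp only: set_block_self identity_blocks_Suc)
  moreover have "identity_blocks (Suc m) x \<in> SL2_pow n"
    using set_block_in_SL2_pow[OF y \<open>m < n\<close>] by (simp add: identity_blocks_Suc)
  ultimately show ?case using x_y by (meson rtrancl_trans)
qed

lemma SL2_pow_common_chain_end:
  fixes x y :: "nat \<Rightarrow> 'a::field"
  assumes "x \<in> SL2_pow n" and "y \<in> SL2_pow n"
  obtains e where "(x, e) \<in> (poly_line_step (SL2_pow n))\<^sup>*" and "(y, e) \<in> (poly_line_step (SL2_pow n))\<^sup>*"
  using SL2_pow_chain_to_identity_blocks[OF assms(1) order_refl]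
    SL2_pow_chain_to_identity_blocks[OF assms(2) order_refl]
    identity_blocks_SL2_pow_eq[OF assms] by metis

theorem lemma2p1:
  fixes f :: "(nat \<Rightarrow> 'a::field_char_0) \<Rightarrow> 'a" and n :: nat
  assumes "alg_closed TYPE('a)"
    and "n \<ge> 1"
    and "regular_on_SL2_pow n f"
    and "\<exists>x\<in>SL2_pow n. \<exists>y\<in>SL2_pow n. f x \<noteq> f y"
  shows "f ` SL2_pow n = UNIV"
proof -
  obtain p where p: "p \<in> poly_funs (4*n)" and f_p: "\<forall>x\<in>SL2_pow n. f x = p x"
    using assms(3) unfolding regular_on_SL2_pow_def by blast
  obtain x y where x: "x \<in> SL2_pow n" and y: "y \<in> SL2_pow n" and "p x \<noteq> p y"
    using assms(4) f_p by metis
  obtain e where "(x, e) \<in> (poly_line_step (SL2_pow n))\<^sup>*" "(y, e) \<in> (poly_line_step (SL2_pow n))\<^sup>*"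
    using SL2_pow_common_chain_end[OF x y] .
  moreover have "p x \<noteq> p e \<or> p y \<noteq> p e"
    using \<open>p x \<noteq> p y\<close> by auto
  ultimately have "p ` SL2_pow n = UNIV"
    using poly_funs_surj_if_nonconstant_on_chain[OF assms(1) p] by blast
  then show ?thesis
    using f_p by (metis image_cong)
qed

end
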